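(* For every $n\ge2$, the Lie group of invertible $n\times n$ upper triangular real matrices has the topological $R_\infty$-property.
   Context: For an automorphism $\varphi$ of a group $G$, the $\varphi$-twisted conjugacy classes are the equivalence classes of the relation $x\sim_\varphi y$ iff $y=gx\varphi(g)^{-1}$ for some $g\in G$; $R(\varphi)\in\mathbb{N}\cup\{\infty\}$ is their number. A topological group $G$ has the topological $R_\infty$-property if $R(\varphi)=\infty$ for every automorphism $\varphi$ of $G$ that is a homeomorphism (for a Lie group: every continuous automorphism). *)

theory Defs
  imports "HOL-Analysis.Analysis"
begin

text \<open>Invertible upper triangular real matrices, indices ordered by the linear order of the
  finite index type 'n (any finite linearly ordered type is order-isomorphic to {1..n}).\<close>
definition upper_triangular_group :: "(real^('n::{finite,wellorder})^('n::{finite,wellorder})) set" where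
  "upper_triangular_group =
     {A.  invertible A \<and> (\<forall>i j. j < i \<longrightarrow> A $ i $ j = 0)}"

definition twisted_conj_rel ::
  "(real^'n^'n) set \<Rightarrow> (real^'n^'n \<Rightarrow> real^'n^'n) \<Rightarrow> ((real^'n^'n) \<times> (real^'n^'n)) set" where
  "twisted_conj_rel G \<phi> =
     {(x, y). x \<in> G \<and> y \<in> G \<and> (\<exists>g\<in>G. y = g ** x ** matrix_inv (\<phi> g))}"

definition reidemeister_infinite ::
  "(real^'n^'n) set \<Rightarrow> (real^'n^'n \<Rightarrow> real^'n^'n) \<Rightarrow> bool" where
  "reidemeister_infinite G \<phi> \<longleftrightarrow> infinite (G // twisted_conj_rel G \<phi>)"

definition top_automorphism ::
  "(real^'n^'n) set \<Rightarrow> (real^'n^'n \<Rightarrow> real^'n^'n) \<Rightarrow> bool" where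
  "top_automorphism G \<phi> \<longleftrightarrow>
     (\<exists>\<psi>. homeomorphism G G \<phi> \<psi>) \<and> (\<forall>x\<in>G. \<forall>y\<in>G. \<phi> (x ** y) = \<phi> x ** \<phi> y)"

definition top_R_infinity :: "(real^'n^'n) set \<Rightarrow> bool" where
  "top_R_infinity G \<longleftrightarrow> (\<forall>\<phi>. top_automorphism G \<phi> \<longrightarrow> reidemeister_infinite G \<phi>)"

end

theory Submission
  imports Defs
begin

text \<open>Write E(t) for the corner transvection 1 + t e_1n. The set of commutators
  [a,b] of the group G of invertible upper triangular matrices consists of unitriangular
  matrices and contains every transvection, so its centre is exactly {E(t)}; being defined
  group-theoretically, it is preserved by every automorphism \<phi>. Hence \<phi>(E(t)) = E(h t) with h
  additive, and continuity of \<phi> makes h linear: \<phi>(E(t)) = E(s t) with s \<noteq> 0. Conjugation by A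
  acts on this centre by E(t) \<mapsto> E(\<rho>(A) t), where \<rho>(A) = a_11 / a_nn, so
  applying \<phi> gives \<rho> \<circ> \<phi> = \<rho>. As \<rho> is multiplicative, y = g x \<phi>(g)\<inverse> implies
  \<rho>(y) = \<rho>(x): \<rho> is constant on twisted conjugacy classes, and it takes every nonzero real
  value.\<close>

(* real^'n^'n, spelled without the ^ syntax: that syntax attaches its own sort constraint
   to 'n, which clashes with the {finite,linorder} annotations below *)
type_synonym 'n sqmat = "((real, 'n) vec, 'n) vec"

lemma infinite_quotient_if_invariant:
  assumes refl: "\<And>x. x \<in> A \<Longrightarrow> (x, x) \<in> R"
    and invariant: "\<And>x y. (x, y) \<in> R \<Longrightarrow> f x = f y"
    and "infinite (f ` A)"
  shows "infinite (A // R)"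
proof
  assume finite_classes: "finite (A // R)"
  have "f ` A \<subseteq> (\<Union>X\<in>A // R. f ` X)"
    using refl by (auto simp: quotient_def)
  moreover have "finite (f ` X)" if "X \<in> A // R" for X
  proof -
    obtain x where "X = R `` {x}"
      using \<open>X \<in> A // R\<close> by (auto simp: quotient_def)
    then have "f ` X \<subseteq> {f x}"
      using invariant by fastforce
    then show ?thesis
      using finite_subset by blast
  qed
  ultimately have "finite (f ` A)"
    using finite_classes by (meson finite_UN_I finite_subset)
  with assms(3) show False
    by contradiction
qed

lemma continuous_additive_real_scale:
  fixes h :: "real \<Rightarrow> real"
  assumes "\<And>x y. h (x + y) = h x + h y" and cont: "continuous_on UNIV h"
  shows "h x = x * h 1"
proof -
  interpret additive h by standard fact
  have h_nat: "h (of_nat n * y) = of_nat n * h y" for n y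
    by (induction n) (auto simp: zero distrib_right add)
  have h_int: "h (of_int m * y) = of_int m * h y" for m y
  proof (cases "m \<ge> 0")
    case True
    then show ?thesis
      using h_nat[of "nat m" y] by simp
  next
    case False
    then have "of_int m * y = - (of_nat (nat (- m)) * y)"
      by simp
    then show ?thesis
      using h_nat[of "nat (- m)" y] False by (simp add: minus)
  qed
  have "h q = q * h 1" if "q \<in> \<rat>" for q
  proof -
    obtain a b where ab: "b > 0" "q = of_int a / of_int b"
      using Rats_cases'[OF \<open>q \<in> \<rat>\<close>] by blast
    then have "of_int b * h q = h (of_int a * 1)"
      by (simp add: flip: h_int)
    also have "\<dots> = of_int a * h 1"
      by (rule h_int)
    finally have "h q = of_int a / of_int b * h 1"
      using ab(1) by (simp add: field_simps)
    then show ?thesis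
      using ab(2) by simp
  qed
  then have "\<rat> \<subseteq> {x. h x = x * h 1}"
    by blast
  moreover have "closed {x. h x = x * h 1}"
    by (rule closed_Collect_eq[OF cont]) (intro continuous_intros)
  ultimately have "closure \<rat> \<subseteq> {x. h x = x * h 1}"
    by (rule closure_minimal)
  then show ?thesis
    using Rats_closure_real by blast
qed

definition single_entry :: "'n::finite \<Rightarrow> 'n \<Rightarrow> real \<Rightarrow> 'n sqmat" where
  "single_entry i j t = (\<chi> k l. if k = i \<and> l = j then t else 0)"

definition transvection :: "'n::finite \<Rightarrow> 'n \<Rightarrow> real \<Rightarrow> 'n sqmat" where
  "transvection i j t = mat 1 + single_entry i j t"

definition dilation :: "'n::finite \<Rightarrow> real \<Rightarrow> 'n sqmat" where
  "dilation i r = (\<chi> k l. if k = l then (if k = i then r else 1) else 0)"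

lemma matrix_add_rdistrib: "(A + B) ** C = A ** C + B ** C"
  by (vector matrix_matrix_mult_def sum.distrib[symmetric] field_simps)

lemma single_entry_nth [simp]: "single_entry i j t $ k $ l = (if k = i \<and> l = j then t else 0)"
  by (simp add: single_entry_def)

lemma matrix_mul_single_entry_nth [simp]:
  "(A ** single_entry i j t) $ k $ l = (if l = j then A $ k $ i * t else 0)"
  by (auto simp: matrix_matrix_mult_def single_entry_def if_distrib cong: if_cong)

lemma single_entry_matrix_mul_nth [simp]:
  "(single_entry i j t ** A) $ k $ l = (if k = i then t * A $ j $ l else 0)"
  by (auto simp: matrix_matrix_mult_def single_entry_def if_distrib if_distribR cong: if_cong)

lemma dilation_nth [simp]: "dilation i r $ k $ l = (if k = l then (if k = i then r else 1) else 0)"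
  by (simp add: dilation_def)

lemma dilation_matrix_mul_nth [simp]:
  "(dilation i r ** A) $ k $ l = (if k = i then r else 1) * A $ k $ l"
proof -
  have "(dilation i r ** A) $ k $ l
      = (\<Sum>m\<in>UNIV. if m = k then (if k = i then r else 1) * A $ k $ l else 0)"
    unfolding matrix_matrix_mult_def vec_lambda_beta by (rule sum.cong) auto
  then show ?thesis
    by simp
qed

lemma transvection_nth:
  "transvection i j t $ k $ l = (if k = l then 1 else 0) + (if k = i \<and> l = j then t else 0)"
  by (simp add: transvection_def mat_def)

lemma matrix_mul_transvection: "A ** transvection i j t = A + A ** single_entry i j t"
  by (simp add: transvection_def matrix_add_ldistrib)

lemma transvection_matrix_mul: "transvection i j t ** A = A + single_entry i j t ** A"
  by (simp add: transvection_def matrix_add_rdistrib)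

lemma transvection_add:
  "i \<noteq> j \<Longrightarrow> transvection i j s ** transvection i j t = transvection i j (s + t)"
  by (simp add: matrix_mul_transvection vec_eq_iff transvection_nth)

lemma transvection_zero [simp]: "transvection i j 0 = mat 1"
  by (simp add: transvection_def vec_eq_iff)

lemma transvection_inject:
  "i \<noteq> j \<Longrightarrow> transvection i j s = transvection i j t \<longleftrightarrow> s = t"
  by (auto simp: vec_eq_iff transvection_nth dest: spec[of _ i] spec[of _ j])

lemma continuous_on_transvection: "continuous_on A (transvection i j)"
proof -
  have "transvection i j t = mat 1 + t *\<^sub>R single_entry i j 1" for t
    by (simp add: transvection_def vec_eq_iff)
  then show ?thesis
    by (simp add: continuous_on_add continuous_on_scaleR)
qed

lemma dilation_transvection_commute:
  "i \<noteq> j \<Longrightarrow> dilation i r ** transvection i j t = transvection i j (r * t) ** dilation i r"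
  by (simp add: matrix_mul_transvection transvection_matrix_mul vec_eq_iff)

definition upper_triangular :: "('n::{finite,linorder}) sqmat \<Rightarrow> bool" where
  "upper_triangular A \<longleftrightarrow> (\<forall>i j. j < i \<longrightarrow> A $ i $ j = 0)"

lemma upper_triangular_group_iff:
  "A \<in> upper_triangular_group \<longleftrightarrow> invertible A \<and> upper_triangular A"
  by (simp add: upper_triangular_group_def upper_triangular_def)

lemma upper_triangular_mult_diag:
  assumes "upper_triangular A" "upper_triangular B"
  shows "(A ** B) $ i $ i = A $ i $ i * B $ i $ i"
proof -
  have "(A ** B) $ i $ i = (\<Sum>k\<in>UNIV. if k = i then A $ i $ i * B $ i $ i else 0)"
    unfolding matrix_matrix_mult_def vec_lambda_beta
  proof (rule sum.cong)
    fix k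
    show "A $ i $ k * B $ k $ i = (if k = i then A $ i $ i * B $ i $ i else 0)"
      using assms unfolding upper_triangular_def by (cases k i rule: linorder_cases) auto
  qed simp
  then show ?thesis
    by simp
qed

lemma upper_triangular_mult:
  assumes "upper_triangular A" "upper_triangular B"
  shows "upper_triangular (A ** B)"
  unfolding upper_triangular_def
proof (intro allI impI)
  fix i j :: 'a
  assume "j < i"
  then have "A $ i $ k * B $ k $ j = 0" for k
    using assms unfolding upper_triangular_def by (cases "k < i") (auto dest: order.strict_trans2)
  then show "(A ** B) $ i $ j = 0"
    unfolding matrix_matrix_mult_def vec_lambda_beta by (simp add: sum.neutral)
qed

lemma upper_triangular_group_mult:
  "A \<in> upper_triangular_group \<Longrightarrow> B \<in> upper_triangular_group \<Longrightarrow> A ** B \<in> upper_triangular_group"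
  by (simp add: upper_triangular_group_iff invertible_mult upper_triangular_mult)

lemma upper_triangular_group_diag_nonzero:
  assumes "A \<in> upper_triangular_group"
  shows "A $ i $ i \<noteq> 0"
proof
  assume "A $ i $ i = 0"
  then have "(\<Prod>k\<in>UNIV. A $ k $ k) = 0"
    by (auto intro: prod_zero)
  moreover have "det A = (\<Prod>k\<in>UNIV. A $ k $ k)"
    using assms by (intro det_upperdiagonal) (auto simp: upper_triangular_group_iff upper_triangular_def)
  ultimately show False
    using assms by (simp add: upper_triangular_group_iff invertible_det_nz)
qed

lemma mat_1_in_upper_triangular_group: "mat 1 \<in> upper_triangular_group"
proof -
  have "invertible (mat 1 :: 'a sqmat)"
    unfolding invertible_def by (rule exI[of _ "mat 1"]) simp
  then show ?thesis
    by (simp add: upper_triangular_group_iff upper_triangular_def mat_def)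
qed

lemma transvection_in_upper_triangular_group:
  assumes "i < j"
  shows "transvection i j t \<in> upper_triangular_group"
  unfolding upper_triangular_group_iff
proof
  show "invertible (transvection i j t)"
    unfolding invertible_def using assms
    by (intro exI[of _ "transvection i j (- t)"]) (simp add: transvection_add)
  show "upper_triangular (transvection i j t)"
    using assms by (auto simp: upper_triangular_def transvection_nth)
qed

lemma dilation_in_upper_triangular_group:
  assumes "r \<noteq> 0"
  shows "dilation i r \<in> upper_triangular_group"
  unfolding upper_triangular_group_iff
proof
  have "dilation i r ** dilation i (1 / r) = mat 1" "dilation i (1 / r) ** dilation i r = mat 1"
    using assms by (simp_all add: vec_eq_iff mat_def)
  then show "invertible (dilation i r)"
    unfolding invertible_def by blast
  show "upper_triangular (dilation i r)"
    by (simp add: upper_triangular_def)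
qed

lemma matrix_inv_left:
  assumes "invertible A"
  shows "matrix_inv A ** A = mat 1"
  using someI_ex[OF assms[unfolded invertible_def]] by (simp add: matrix_inv_def)

lemma matrix_inv_mat_1: "matrix_inv (mat 1) = mat 1"
  unfolding matrix_inv_def by (rule some_equality) auto

lemma invertible_mult_right_cancel:
  assumes "invertible A" "X ** A = Y ** A"
  shows "X = Y"
proof -
  obtain B where B: "A ** B = mat 1"
    using assms(1) by (auto simp: invertible_def)
  have "X = (X ** A) ** B"
    by (simp add: B flip: matrix_mul_assoc)
  also have "\<dots> = Y"
    by (simp add: assms(2) B flip: matrix_mul_assoc)
  finally show ?thesis .
qed

definition min_index :: "'n::{finite,linorder}" where
  "min_index = Min UNIV"

definition max_index :: "'n::{finite,linorder}" where
  "max_index = Max UNIV"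

lemma min_index_le: "min_index \<le> i"
  by (simp add: min_index_def)

lemma le_max_index: "i \<le> max_index"
  by (simp add: max_index_def)

lemma min_index_less_max_index:
  assumes "CARD('n::{finite,linorder}) \<ge> 2"
  shows "(min_index :: 'n) < max_index"
proof (rule ccontr)
  assume "\<not> (min_index :: 'n) < max_index"
  then have "i = min_index" for i :: 'n
    using min_index_le[of i] le_max_index[of i] by simp
  then have "\<forall>i j :: 'n. i = j"
    by (metis (full_types))
  then have "CARD('n) \<le> Suc 0"
    by (simp add: card_le_Suc0_iff_eq)
  with assms show False
    by simp
qed

definition corner_ratio :: "('n::{finite,linorder}) sqmat \<Rightarrow> real" where
  "corner_ratio A = A $ min_index $ min_index / A $ max_index $ max_index"

lemma corner_ratio_mult:
  "upper_triangular A \<Longrightarrow> upper_triangular B \<Longrightarrow> corner_ratio (A ** B) = corner_ratio A * corner_ratio B"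
  by (simp add: corner_ratio_def upper_triangular_mult_diag)

lemma corner_ratio_image:
  assumes "(min_index :: 'n::{finite,wellorder}) < max_index"
  shows "corner_ratio ` (upper_triangular_group :: 'n sqmat set) = - {0}"
proof
  show "corner_ratio ` upper_triangular_group \<subseteq> - {0 :: real}"
    by (auto simp: corner_ratio_def upper_triangular_group_diag_nonzero)
  show "- {0} \<subseteq> corner_ratio ` (upper_triangular_group :: 'n sqmat set)"
  proof
    fix r :: real
    assume "r \<in> - {0}"
    then have "dilation min_index r \<in> (upper_triangular_group :: 'n sqmat set)"
      by (simp add: dilation_in_upper_triangular_group)
    moreover have "corner_ratio (dilation min_index r :: 'n sqmat) = r"
      using assms by (simp add: corner_ratio_def)
    ultimately show "r \<in> corner_ratio ` (upper_triangular_group :: 'n sqmat set)"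
      by (metis image_eqI)
  qed
qed

lemma upper_triangular_mult_corner_transvection:
  assumes "upper_triangular A" "A $ max_index $ max_index \<noteq> 0"
  shows "A ** transvection min_index max_index t
    = transvection min_index max_index (corner_ratio A * t) ** A"
proof -
  have "A $ max_index $ l = 0" if "l \<noteq> max_index" for l
    using assms(1) le_max_index[of l] that by (auto simp: upper_triangular_def)
  moreover have "A $ k $ min_index = 0" if "k \<noteq> min_index" for k
    using assms(1) min_index_le[of k] that by (auto simp: upper_triangular_def)
  ultimately show ?thesis
    using assms(2)
    by (auto simp: matrix_mul_transvection transvection_matrix_mul vec_eq_iff corner_ratio_def)
qed

text \<open>The element c with a b = b a c is the commutator a\<inverse> b\<inverse> a b; the inverse-free form
  makes sense for any set of matrices.\<close>
definition commutator_set :: "('n::finite) sqmat set \<Rightarrow> 'n sqmat set" where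
  "commutator_set G = {c \<in> G. \<exists>a\<in>G. \<exists>b\<in>G. a ** b = b ** a ** c}"

definition center_of :: "('n::finite) sqmat set \<Rightarrow> 'n sqmat set" where
  "center_of S = {x \<in> S. \<forall>c\<in>S. x ** c = c ** x}"

lemma commutator_set_subset: "commutator_set G \<subseteq> G"
  by (auto simp: commutator_set_def)

lemma multiplicative_image_commutator_set:
  assumes closed: "\<And>x y. x \<in> G \<Longrightarrow> y \<in> G \<Longrightarrow> x ** y \<in> G"
    and maps: "\<phi> ` G \<subseteq> G"
    and mult: "\<And>x y. x \<in> G \<Longrightarrow> y \<in> G \<Longrightarrow> \<phi> (x ** y) = \<phi> x ** \<phi> y"
  shows "\<phi> ` commutator_set G \<subseteq> commutator_set G"
proof
  fix d
  assume "d \<in> \<phi> ` commutator_set G"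
  then obtain a b c where abc: "a \<in> G" "b \<in> G" "c \<in> G" "a ** b = b ** a ** c" and d: "d = \<phi> c"
    by (auto simp: commutator_set_def)
  have "\<phi> a ** \<phi> b = \<phi> (b ** a ** c)"
    using abc(1,2,4) mult by metis
  also have "\<dots> = \<phi> b ** \<phi> a ** d"
    using abc by (simp add: mult closed d)
  finally show "d \<in> commutator_set G"
    using abc d maps unfolding commutator_set_def by blast
qed

lemma multiplicative_image_center_of:
  assumes "S \<subseteq> G" "\<phi> ` S = S"
    and mult: "\<And>x y. x \<in> G \<Longrightarrow> y \<in> G \<Longrightarrow> \<phi> (x ** y) = \<phi> x ** \<phi> y"
  shows "\<phi> ` center_of S \<subseteq> center_of S"
proof
  fix y
  assume "y \<in> \<phi> ` center_of S"
  then obtain x where x: "x \<in> S" "\<And>c. c \<in> S \<Longrightarrow> x ** c = c ** x" and y: "y = \<phi> x"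
    by (auto simp: center_of_def)
  have "y ** c = c ** y" if "c \<in> S" for c
  proof -
    have "c \<in> \<phi> ` S"
      using that assms(2) by simp
    then obtain c' where c': "c' \<in> S" "c = \<phi> c'"
      by blast
    have in_G: "x \<in> G" "c' \<in> G"
      using x(1) c'(1) assms(1) by auto
    have "y ** c = \<phi> (x ** c')"
      using in_G by (simp add: mult y c'(2))
    also have "\<dots> = \<phi> (c' ** x)"
      using x(2) c'(1) by simp
    also have "\<dots> = c ** y"
      using in_G by (simp add: mult y c'(2))
    finally show ?thesis .
  qed
  moreover have "y \<in> \<phi> ` S"
    using x(1) y by simp
  then have "y \<in> S"
    using assms(2) by simp
  ultimately show "y \<in> center_of S"
    by (simp add: center_of_def)
qed

lemma top_automorphismD:
  assumes "top_automorphism G \<phi>"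
  shows top_automorphism_image: "\<phi> ` G = G"
    and top_automorphism_inj_on: "inj_on \<phi> G"
    and top_automorphism_continuous_on: "continuous_on G \<phi>"
    and top_automorphism_mult: "x \<in> G \<Longrightarrow> y \<in> G \<Longrightarrow> \<phi> (x ** y) = \<phi> x ** \<phi> y"
proof -
  obtain \<psi> where "homeomorphism G G \<phi> \<psi>"
    using assms by (auto simp: top_automorphism_def)
  then show "\<phi> ` G = G" "inj_on \<phi> G" "continuous_on G \<phi>"
    by (auto simp: homeomorphism_def intro: inj_on_inverseI)
  show "x \<in> G \<Longrightarrow> y \<in> G \<Longrightarrow> \<phi> (x ** y) = \<phi> x ** \<phi> y"
    using assms by (simp add: top_automorphism_def)
qed

lemma top_automorphism_inverse:
  assumes aut: "top_automorphism G \<phi>"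
    and closed: "\<And>x y. x \<in> G \<Longrightarrow> y \<in> G \<Longrightarrow> x ** y \<in> G"
  obtains \<psi> where "top_automorphism G \<psi>" "\<And>y. y \<in> G \<Longrightarrow> \<phi> (\<psi> y) = y"
proof -
  obtain \<psi> where hom: "homeomorphism G G \<phi> \<psi>"
    using aut by (auto simp: top_automorphism_def)
  then have \<psi>G: "\<psi> ` G = G" and \<psi>\<phi>: "\<And>x. x \<in> G \<Longrightarrow> \<psi> (\<phi> x) = x"
    and \<phi>\<psi>: "\<And>y. y \<in> G \<Longrightarrow> \<phi> (\<psi> y) = y"
    by (auto simp: homeomorphism_def)
  have "\<psi> (x ** y) = \<psi> x ** \<psi> y" if "x \<in> G" "y \<in> G" for x y
  proof -
    have "\<psi> x \<in> G" "\<psi> y \<in> G"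
      using that \<psi>G by blast+
    have "\<psi> (x ** y) = \<psi> (\<phi> (\<psi> x) ** \<phi> (\<psi> y))"
      using that by (simp add: \<phi>\<psi>)
    also have "\<dots> = \<psi> (\<phi> (\<psi> x ** \<psi> y))"
      by (simp add: top_automorphism_mult[OF aut] \<open>\<psi> x \<in> G\<close> \<open>\<psi> y \<in> G\<close>)
    also have "\<dots> = \<psi> x ** \<psi> y"
      by (simp add: \<psi>\<phi> closed \<open>\<psi> x \<in> G\<close> \<open>\<psi> y \<in> G\<close>)
    finally show ?thesis .
  qed
  moreover have "homeomorphism G G \<psi> \<phi>"
    using hom by (rule homeomorphism_symD)
  ultimately have "top_automorphism G \<psi>"
    unfolding top_automorphism_def by blast
  then show ?thesis
    using that \<phi>\<psi> by blast
qed

lemma top_automorphism_commutator_set: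
  assumes aut: "top_automorphism G \<phi>"
    and closed: "\<And>x y. x \<in> G \<Longrightarrow> y \<in> G \<Longrightarrow> x ** y \<in> G"
  shows "\<phi> ` commutator_set G = commutator_set G"
proof
  show "\<phi> ` commutator_set G \<subseteq> commutator_set G"
    by (rule multiplicative_image_commutator_set[OF closed])
      (simp_all add: top_automorphism_image[OF aut] top_automorphism_mult[OF aut])
  obtain \<psi> where \<psi>: "top_automorphism G \<psi>" "\<And>y. y \<in> G \<Longrightarrow> \<phi> (\<psi> y) = y"
    using top_automorphism_inverse[OF aut closed] by metis
  have \<psi>_commutator_set: "\<psi> ` commutator_set G \<subseteq> commutator_set G"
    by (rule multiplicative_image_commutator_set[OF closed])
      (simp_all add: top_automorphism_image[OF \<psi>(1)] top_automorphism_mult[OF \<psi>(1)])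
  show "commutator_set G \<subseteq> \<phi> ` commutator_set G"
  proof
    fix c
    assume c: "c \<in> commutator_set G"
    then have "c = \<phi> (\<psi> c)"
      using commutator_set_subset \<psi>(2) by (metis subsetD)
    moreover have "\<psi> c \<in> commutator_set G"
      using c \<psi>_commutator_set by auto
    ultimately show "c \<in> \<phi> ` commutator_set G"
      by (rule image_eqI)
  qed
qed

lemma top_automorphism_mat_1:
  assumes aut: "top_automorphism G \<phi>" and "mat 1 \<in> G" and "\<And>A. A \<in> G \<Longrightarrow> invertible A"
  shows "\<phi> (mat 1) = mat 1"
proof -
  have "\<phi> (mat 1) \<in> G"
    using assms(2) top_automorphism_image[OF aut] by blast
  moreover have "mat 1 ** \<phi> (mat 1) = \<phi> (mat 1) ** \<phi> (mat 1)"
    using top_automorphism_mult[OF aut assms(2) assms(2)] by simp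
  ultimately show ?thesis
    using assms(3) invertible_mult_right_cancel by metis
qed

lemma twisted_conj_rel_refl:
  assumes "top_automorphism G \<phi>" "mat 1 \<in> G" "\<And>A. A \<in> G \<Longrightarrow> invertible A" "x \<in> G"
  shows "(x, x) \<in> twisted_conj_rel G \<phi>"
  using assms unfolding twisted_conj_rel_def
  by (auto simp: top_automorphism_mat_1 matrix_inv_mat_1 intro!: bexI[of _ "mat 1"])

lemma commutator_set_diag:
  assumes "c \<in> commutator_set upper_triangular_group"
  shows "c $ i $ i = 1"
proof -
  obtain a b where "a \<in> upper_triangular_group" "b \<in> upper_triangular_group"
    and ab: "a ** b = b ** a ** c" and "c \<in> upper_triangular_group"
    using assms by (auto simp: commutator_set_def)
  then have UT: "upper_triangular a" "upper_triangular b" "upper_triangular c"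
    and nonzero: "a $ i $ i * b $ i $ i \<noteq> 0"
    by (simp_all add: upper_triangular_group_iff upper_triangular_group_diag_nonzero)
  have "a $ i $ i * b $ i $ i = (a ** b) $ i $ i"
    using UT by (simp add: upper_triangular_mult_diag)
  also have "\<dots> = (b ** a ** c) $ i $ i"
    by (simp add: ab)
  also have "\<dots> = a $ i $ i * b $ i $ i * c $ i $ i"
    using UT by (simp add: upper_triangular_mult_diag upper_triangular_mult)
  finally show ?thesis
    using nonzero by simp
qed

lemma transvection_in_commutator_set:
  assumes "i < j"
  shows "transvection i j t \<in> commutator_set upper_triangular_group"
proof -
  have neq: "i \<noteq> j"
    using assms by simp
  \<comment> \<open>conjugation by dilation i 2 doubles the parameter of transvection i j\<close>
  have "dilation i 2 ** transvection i j (2 * t)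
      = transvection i j (2 * t) ** (transvection i j (2 * t) ** dilation i 2)"
    using neq by (simp add: dilation_transvection_commute transvection_add matrix_mul_assoc)
  also have "\<dots> = transvection i j (2 * t) ** dilation i 2 ** transvection i j t"
    using neq by (simp add: dilation_transvection_commute flip: matrix_mul_assoc)
  finally have "dilation i 2 ** transvection i j (2 * t)
      = transvection i j (2 * t) ** dilation i 2 ** transvection i j t" .
  moreover have "dilation i 2 \<in> upper_triangular_group"
    by (simp add: dilation_in_upper_triangular_group)
  moreover have "transvection i j s \<in> upper_triangular_group" for s
    using assms by (rule transvection_in_upper_triangular_group)
  ultimately show ?thesis
    unfolding commutator_set_def by blast
qed

lemma transvection_commute_nth:
  assumes "x ** transvection i j 1 = transvection i j 1 ** x"
  shows "(if l = j then x $ k $ i else 0) = (if k = i then x $ j $ l else 0)"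
proof -
  have "x ** single_entry i j 1 = single_entry i j 1 ** x"
    using assms by (simp add: matrix_mul_transvection transvection_matrix_mul)
  then have "(x ** single_entry i j 1) $ k $ l = (single_entry i j 1 ** x) $ k $ l"
    by simp
  then show ?thesis
    by (simp only: matrix_mul_single_entry_nth single_entry_matrix_mul_nth mult_1_right mult_1_left)
qed

lemma commute_transvections_imp_corner_transvection:
  fixes x :: "('n::{finite,linorder}) sqmat"
  assumes min_less_max: "(min_index :: 'n) < max_index"
    and diag: "\<And>k. x $ k $ k = 1"
    and commute: "\<And>i j. i < j \<Longrightarrow> x ** transvection i j 1 = transvection i j 1 ** x"
  shows "x = transvection min_index max_index (x $ min_index $ max_index)"
proof -
  note swap = transvection_commute_nth[OF commute]
  \<comment> \<open>an off-diagonal x_kl vanishes by commutation with E_l,max if l < max,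
    and with E_min,k if l = max and k > min\<close>
  have "x $ k $ l = transvection min_index max_index (x $ min_index $ max_index) $ k $ l" for k l
  proof -
    consider "k = l" | "k \<noteq> l" "l < max_index" | "k \<noteq> l" "l = max_index" "k = min_index"
      | "k \<noteq> l" "l = max_index" "min_index < k"
      using le_max_index[of l] min_index_le[of k] by fastforce
    then show ?thesis
    proof cases
      case 1
      moreover have "min_index \<noteq> (max_index :: 'n)"
        using min_less_max by simp
      ultimately show ?thesis
        using diag by (auto simp: transvection_nth)
    next
      case 2
      then show ?thesis
        using swap[where i = l and j = max_index and l = max_index] by (auto simp: transvection_nth)
    next
      case 3
      then show ?thesis
        by (simp add: transvection_nth)
    next
      case 4
      then show ?thesis
        using swap[where i = min_index and j = k and k = min_index and l = l]
        by (auto simp: transvection_nth)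
    qed
  qed
  then show ?thesis
    unfolding vec_eq_iff by blast
qed

lemma center_of_commutator_set_upper_triangular:
  assumes min_less_max: "(min_index :: 'n::{finite,wellorder}) < max_index"
  shows "center_of (commutator_set (upper_triangular_group :: 'n sqmat set))
    = range (transvection min_index max_index)"
proof
  show "center_of (commutator_set upper_triangular_group)
    \<subseteq> range (transvection min_index max_index :: real \<Rightarrow> 'n sqmat)"
  proof
    fix x :: "'n sqmat"
    assume x: "x \<in> center_of (commutator_set upper_triangular_group)"
    have "x = transvection min_index max_index (x $ min_index $ max_index)"
    proof (rule commute_transvections_imp_corner_transvection[OF min_less_max])
      show "x $ k $ k = 1" for k
        using x by (simp add: center_of_def commutator_set_diag)
      show "x ** transvection i j 1 = transvection i j 1 ** x" if "i < j" for i j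
        using x transvection_in_commutator_set[OF that] by (simp add: center_of_def)
    qed
    then show "x \<in> range (transvection min_index max_index)"
      by (rule range_eqI)
  qed
  show "range (transvection min_index max_index)
    \<subseteq> center_of (commutator_set (upper_triangular_group :: 'n sqmat set))"
  proof (clarsimp simp: center_of_def transvection_in_commutator_set[OF min_less_max])
    fix t and c :: "'n sqmat"
    assume c: "c \<in> commutator_set upper_triangular_group"
    then have "c \<in> upper_triangular_group"
      using commutator_set_subset by blast
    then have "upper_triangular c"
      by (simp add: upper_triangular_group_iff)
    moreover have "corner_ratio c = 1"
      using c by (simp add: corner_ratio_def commutator_set_diag)
    ultimately show "transvection min_index max_index t ** c = c ** transvection min_index max_index t"
      by (simp add: upper_triangular_mult_corner_transvection commutator_set_diag[OF c])
  qed
qed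

context
  fixes \<phi> :: "'n sqmat \<Rightarrow> ('n::{finite,wellorder}) sqmat"
  assumes aut: "top_automorphism upper_triangular_group \<phi>"
    and min_less_max: "(min_index :: 'n) < max_index"
begin

lemma top_automorphism_corner_transvection_range:
  "\<phi> (transvection min_index max_index t) \<in> range (transvection min_index max_index)"
proof -
  have "\<phi> ` commutator_set upper_triangular_group = commutator_set upper_triangular_group"
    using aut upper_triangular_group_mult by (rule top_automorphism_commutator_set)
  then have "\<phi> ` center_of (commutator_set upper_triangular_group)
      \<subseteq> center_of (commutator_set upper_triangular_group)"
    by (rule multiplicative_image_center_of[where \<phi> = \<phi> and G = upper_triangular_group,
          OF commutator_set_subset _ top_automorphism_mult[OF aut]])
  then show ?thesis
    unfolding center_of_commutator_set_upper_triangular[OF min_less_max] by blast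
qed

lemma top_automorphism_corner_transvection:
  obtains s where "s \<noteq> 0"
    "\<And>t. \<phi> (transvection min_index max_index t) = transvection min_index max_index (s * t)"
proof -
  let ?E = "transvection min_index max_index :: real \<Rightarrow> 'n sqmat"
  have neq: "min_index \<noteq> (max_index :: 'n)"
    using min_less_max by simp
  have E_in: "?E t \<in> upper_triangular_group" for t
    using min_less_max by (rule transvection_in_upper_triangular_group)
  have E_inj: "?E s = ?E t \<longleftrightarrow> s = t" for s t
    using neq by (rule transvection_inject)
  define h where "h t = \<phi> (?E t) $ min_index $ max_index" for t
  have h: "\<phi> (?E t) = ?E (h t)" for t
  proof -
    obtain s where "\<phi> (?E t) = ?E s"
      using top_automorphism_corner_transvection_range by blast
    then show ?thesis
      using neq by (simp add: h_def transvection_nth)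
  qed
  have add: "h (s + t) = h s + h t" for s t
  proof -
    have "?E (h (s + t)) = \<phi> (?E s ** ?E t)"
      by (simp add: h transvection_add neq)
    also have "\<dots> = \<phi> (?E s) ** \<phi> (?E t)"
      by (rule top_automorphism_mult[OF aut E_in E_in])
    also have "\<dots> = ?E (h s + h t)"
      by (simp add: h transvection_add neq)
    finally show ?thesis
      by (simp add: E_inj)
  qed
  have "continuous_on UNIV (\<lambda>t. \<phi> (?E t))"
    by (rule continuous_on_compose2[OF top_automorphism_continuous_on[OF aut]
          continuous_on_transvection[of UNIV min_index max_index]]) (auto intro: E_in)
  then have "continuous_on UNIV h"
    unfolding h_def[abs_def] by (intro continuous_intros)
  then have linear: "h t = t * h 1" for t
    by (rule continuous_additive_real_scale[where h = h, OF add])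
  have "h 1 \<noteq> 0"
  proof
    assume "h 1 = 0"
    then have "\<phi> (?E 1) = \<phi> (?E 0)"
      using h[of 1] h[of 0] linear[of 0] by simp
    then have "?E 1 = ?E 0"
      using top_automorphism_inj_on[OF aut] E_in by (meson inj_onD)
    then show False
      using E_inj[of 1 0] by simp
  qed
  moreover have "\<phi> (?E t) = ?E (h 1 * t)" for t
    using h[of t] linear[of t] by (simp add: mult.commute)
  ultimately show ?thesis
    by (rule that)
qed

lemma top_automorphism_corner_ratio:
  assumes A: "A \<in> upper_triangular_group"
  shows "corner_ratio (\<phi> A) = corner_ratio A"
proof -
  let ?E = "transvection min_index max_index :: real \<Rightarrow> 'n sqmat"
  obtain s where s: "s \<noteq> 0" "\<And>t. \<phi> (?E t) = ?E (s * t)"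
    using top_automorphism_corner_transvection by metis
  have E_in: "?E t \<in> upper_triangular_group" for t
    using min_less_max by (rule transvection_in_upper_triangular_group)
  have conj: "B ** ?E t = ?E (corner_ratio B * t) ** B" if "B \<in> upper_triangular_group" for B t
    using that by (simp add: upper_triangular_mult_corner_transvection upper_triangular_group_iff
        upper_triangular_group_diag_nonzero)
  have \<phi>A: "\<phi> A \<in> upper_triangular_group"
    using A top_automorphism_image[OF aut] by blast
  have "?E (corner_ratio (\<phi> A) * s) ** \<phi> A = \<phi> A ** \<phi> (?E 1)"
    using conj[OF \<phi>A] s(2) by simp
  also have "\<dots> = \<phi> (A ** ?E 1)"
    by (rule top_automorphism_mult[OF aut A E_in, symmetric])
  also have "\<dots> = \<phi> (?E (corner_ratio A) ** A)"
    using conj[OF A, of 1] by simp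
  also have "\<dots> = \<phi> (?E (corner_ratio A)) ** \<phi> A"
    by (rule top_automorphism_mult[OF aut E_in A])
  also have "\<dots> = ?E (corner_ratio A * s) ** \<phi> A"
    by (simp add: s(2) mult.commute)
  finally have "?E (corner_ratio (\<phi> A) * s) = ?E (corner_ratio A * s)"
    using \<phi>A by (auto simp: upper_triangular_group_iff intro: invertible_mult_right_cancel)
  then show ?thesis
    using min_less_max s(1) by (simp add: transvection_inject)
qed

lemma twisted_conj_rel_corner_ratio:
  assumes "(x, y) \<in> twisted_conj_rel upper_triangular_group \<phi>"
  shows "corner_ratio x = corner_ratio y"
proof -
  obtain g where x: "x \<in> upper_triangular_group" and y: "y \<in> upper_triangular_group"
    and g: "g \<in> upper_triangular_group" and y_eq: "y = g ** x ** matrix_inv (\<phi> g)"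
    using assms unfolding twisted_conj_rel_def by blast
  have \<phi>g: "\<phi> g \<in> upper_triangular_group"
    using g top_automorphism_image[OF aut] by blast
  then have "y ** \<phi> g = g ** x"
    using y_eq by (simp add: matrix_inv_left upper_triangular_group_iff flip: matrix_mul_assoc)
  have "corner_ratio y * corner_ratio g = corner_ratio y * corner_ratio (\<phi> g)"
    using g by (simp add: top_automorphism_corner_ratio)
  also have "\<dots> = corner_ratio (y ** \<phi> g)"
    using y \<phi>g by (simp add: corner_ratio_mult upper_triangular_group_iff)
  also have "\<dots> = corner_ratio g * corner_ratio x"
    using g x \<open>y ** \<phi> g = g ** x\<close> by (simp add: corner_ratio_mult upper_triangular_group_iff)
  finally have "corner_ratio y * corner_ratio g = corner_ratio x * corner_ratio g"
    by simp
  moreover have "corner_ratio g \<noteq> 0"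
    using g by (simp add: corner_ratio_def upper_triangular_group_diag_nonzero)
  ultimately show ?thesis
    by simp
qed

end

theorem theorem5p3:
  assumes "CARD('n) \<ge> 2"
  shows "top_R_infinity (upper_triangular_group :: (real^('n::{finite,wellorder})^('n::{finite,wellorder})) set)"
  unfolding top_R_infinity_def reidemeister_infinite_def
proof (intro allI impI)
  fix \<phi> :: "'n sqmat \<Rightarrow> 'n sqmat"
  assume aut: "top_automorphism upper_triangular_group \<phi>"
  have min_less_max: "(min_index :: 'n) < max_index"
    using assms by (rule min_index_less_max_index)
  have "infinite (corner_ratio ` (upper_triangular_group :: ('n sqmat) set))"
    using infinite_UNIV_char_0 by (simp add: corner_ratio_image[OF min_less_max] Compl_eq_Diff_UNIV)
  then show "infinite (upper_triangular_group // twisted_conj_rel upper_triangular_group \<phi>)"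
    using aut mat_1_in_upper_triangular_group twisted_conj_rel_corner_ratio[OF aut min_less_max]
    by (intro infinite_quotient_if_invariant twisted_conj_rel_refl)
      (auto simp: upper_triangular_group_iff)
qed

end
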